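(* Let $\alpha$ be a partial action datum of $M$ on $X\in\mathscr{C}$ such that the coproducts $\coprod_{m\in M}X$ and $\coprod_{(m,n)\in M\times M}\operatorname{dom}\alpha_n$ exist. Then: (i) if $r\colon\alpha\to\beta$ is a reflection of $\alpha$ in $\mathrm{Act}_M(\mathscr{C})$, with $\beta$ acting on $Y$, then $H_{X,\beta}(r)\colon\psi\to\beta$ is a coequalizer of $p,q\colon\varphi\to\psi$ in $\mathrm{Act}_M(\mathscr{C})$; (ii) if $c\colon\psi\to\beta$ is a coequalizer of $p$ and $q$ in $\mathrm{Act}_M(\mathscr{C})$, then $c\circ u_e\colon\alpha\to\beta$ is a reflection of $\alpha$ in $\mathrm{Act}_M(\mathscr{C})$. In particular, $\alpha$ has a reflection in $\mathrm{Act}_M(\mathscr{C})$ if and only if $p$ and $q$ have a coequalizer in $\mathrm{Act}_M(\mathscr{C})$.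
   Context: $M$ is a monoid with identity $e$ and $\mathscr{C}$ is a category with pullbacks. A partial action datum of $M$ on $X$ assigns to each $m\in M$ an isomorphism class of spans $[\operatorname{dom}\alpha_m,\iota_m,\alpha_m]$ with $\iota_m\colon\operatorname{dom}\alpha_m\to X$ a monomorphism and $\alpha_m\colon\operatorname{dom}\alpha_m\to X$ (isomorphism of spans: an isomorphism of apexes commuting with both legs); representatives are fixed. A global action of $M$ on $Y$ is a datum with $\beta(m)=[Y,\mathrm{id}_Y,\beta_m]$, $\beta_e=\mathrm{id}_Y$, $\beta_n\circ\beta_m=\beta_{nm}$. Given data $\alpha$ on $X$ and $\beta$ on $Y$ with representatives $[\operatorname{dom}\alpha_m,\iota_m,\alpha_m]$, $[\operatorname{dom}\beta_m,\kappa_m,\beta_m]$, a datum morphism $\alpha\to\beta$ is a morphism $f\colon X\to Y$ such that for each $m$ there is $f_m$ with $\kappa_m\circ f_m=f\circ\iota_m$, $\beta_m\circ f_m=f\circ\alpha_m$. $\mathrm{Act}_M(\mathscr{C})$ is the category of global actions with datum morphisms (for global actions these are the $g$ with $g\circ\beta_m=\gamma_m\circ g$). A reflection of $\alpha$ in $\mathrm{Act}_M(\mathscr{C})$ is a datum morphism $r\colon\alpha\to\beta$ with $\beta$ global such that for every datum morphism $f\colon\alpha\to\gamma$ with $\gamma$ global there is a unique datum morphism $f'\colon\beta\to\gamma$ with $f'\circ r=f$. Let $u_m\colon X\to\coprod_{m\in M}X$ and $u_{(m,n)}\colon\operatorname{dom}\alpha_n\to\coprod_{(m,n)}\operatorname{dom}\alpha_n$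 be the coproduct inclusions; $p,q$ are the unique morphisms with $p\circ u_{(m,n)}=u_{mn}\circ\iota_n$, $q\circ u_{(m,n)}=u_m\circ\alpha_n$. $\varphi$ is the global action on $\coprod_{(s,t)}\operatorname{dom}\alpha_t$ with $\varphi_m\circ u_{(s,t)}=u_{(ms,t)}$, and $\psi$ is the global action on $\coprod_s X$ with $\psi_m\circ u_s=u_{ms}$; $p,q$ are morphisms $\varphi\to\psi$ in $\mathrm{Act}_M(\mathscr{C})$. For a global action $\gamma$ on $Z$ and $f\colon X\to Z$, $H_{X,\gamma}(f)$ is the unique morphism $\coprod_m X\to Z$ with $H_{X,\gamma}(f)\circ u_m=\gamma_m\circ f$. *)

theory Defs
  imports Main
begin

text \<open>A category given by explicit carriers. Comp g f denotes g after f,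
  defined when Cod f = Dom g.\<close>

record ('o, 'a) cat =
  Obj :: "'o set"
  Arr :: "'a set"
  Dom :: "'a \<Rightarrow> 'o"
  Cod :: "'a \<Rightarrow> 'o"
  Id  :: "'o \<Rightarrow> 'a"
  Comp :: "'a \<Rightarrow> 'a \<Rightarrow> 'a"

definition hom :: "('o, 'a) cat \<Rightarrow> 'o \<Rightarrow> 'o \<Rightarrow> 'a set" where
  "hom C A B = {f \<in> Arr C. Dom C f = A \<and> Cod C f = B}"

definition is_category :: "('o, 'a) cat \<Rightarrow> bool" where
  "is_category C \<longleftrightarrow>
     (\<forall>f \<in> Arr C. Dom C f \<in> Obj C \<and> Cod C f \<in> Obj C) \<and>
     (\<forall>A \<in> Obj C. Id C A \<in> hom C A A) \<and>
     (\<forall>f \<in> Arr C. \<forall>g \<in> Arr C. Cod C f = Dom C g \<longrightarrow>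
         Comp C g f \<in> hom C (Dom C f) (Cod C g)) \<and>
     (\<forall>f \<in> Arr C. \<forall>g \<in> Arr C. \<forall>h \<in> Arr C.
         Cod C f = Dom C g \<longrightarrow> Cod C g = Dom C h \<longrightarrow>
         Comp C h (Comp C g f) = Comp C (Comp C h g) f) \<and>
     (\<forall>f \<in> Arr C. Comp C (Id C (Cod C f)) f = f \<and> Comp C f (Id C (Dom C f)) = f)"

definition is_mono :: "('o, 'a) cat \<Rightarrow> 'a \<Rightarrow> bool" where
  "is_mono C f \<longleftrightarrow> f \<in> Arr C \<and>
     (\<forall>g \<in> Arr C. \<forall>h \<in> Arr C. Cod C g = Dom C f \<longrightarrow> Cod C h = Dom C f \<longrightarrow>
        Dom C g = Dom C h \<longrightarrow> Comp C f g = Comp C f h \<longrightarrow> g = h)"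

definition has_pullbacks :: "('o, 'a) cat \<Rightarrow> bool" where
  "has_pullbacks C \<longleftrightarrow>
     (\<forall>f \<in> Arr C. \<forall>g \<in> Arr C. Cod C f = Cod C g \<longrightarrow>
        (\<exists>P p1 p2. P \<in> Obj C \<and> p1 \<in> hom C P (Dom C f) \<and> p2 \<in> hom C P (Dom C g) \<and>
           Comp C f p1 = Comp C g p2 \<and>
           (\<forall>Q q1 q2. Q \<in> Obj C \<and> q1 \<in> hom C Q (Dom C f) \<and> q2 \<in> hom C Q (Dom C g) \<and>
              Comp C f q1 = Comp C g q2 \<longrightarrow>
              (\<exists>!h. h \<in> hom C Q P \<and> Comp C p1 h = q1 \<and> Comp C p2 h = q2))))"

text \<open>Partial action datum of the monoid 'm (identity 1, product *) on X,
  given by fixed representatives (dom alpha_m, iota_m, alpha_m) = (D m, \<iota> m, \<alpha> m).\<close>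

definition partial_action_datum ::
  "('o, 'a) cat \<Rightarrow> 'o \<Rightarrow> ('m \<Rightarrow> 'o) \<Rightarrow> ('m \<Rightarrow> 'a) \<Rightarrow> ('m \<Rightarrow> 'a) \<Rightarrow> bool" where
  "partial_action_datum C X D \<iota> \<alpha> \<longleftrightarrow> X \<in> Obj C \<and>
     (\<forall>m. D m \<in> Obj C \<and> \<iota> m \<in> hom C (D m) X \<and> is_mono C (\<iota> m) \<and> \<alpha> m \<in> hom C (D m) X)"

definition datum_mor ::
  "('o, 'a) cat \<Rightarrow> 'o \<Rightarrow> ('m \<Rightarrow> 'o) \<Rightarrow> ('m \<Rightarrow> 'a) \<Rightarrow> ('m \<Rightarrow> 'a)
     \<Rightarrow> 'o \<Rightarrow> ('m \<Rightarrow> 'o) \<Rightarrow> ('m \<Rightarrow> 'a) \<Rightarrow> ('m \<Rightarrow> 'a) \<Rightarrow> 'a \<Rightarrow> bool" where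
  "datum_mor C X D \<iota> \<alpha> Y E \<kappa> \<beta> f \<longleftrightarrow> f \<in> hom C X Y \<and>
     (\<forall>m. \<exists>fm \<in> hom C (D m) (E m).
        Comp C (\<kappa> m) fm = Comp C f (\<iota> m) \<and> Comp C (\<beta> m) fm = Comp C f (\<alpha> m))"

definition global_action :: "('o, 'a) cat \<Rightarrow> 'o \<Rightarrow> ('m::monoid_mult \<Rightarrow> 'a) \<Rightarrow> bool" where
  "global_action C Y b \<longleftrightarrow> Y \<in> Obj C \<and> (\<forall>m. b m \<in> hom C Y Y) \<and>
     b 1 = Id C Y \<and> (\<forall>m n. Comp C (b n) (b m) = b (n * m))"

text \<open>Morphisms in Act_M(C): datum morphisms between global actions,
  a global action b on Y being the datum m \<mapsto> [Y, id_Y, b m].\<close>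

definition act_mor ::
  "('o, 'a) cat \<Rightarrow> 'o \<Rightarrow> ('m::monoid_mult \<Rightarrow> 'a) \<Rightarrow> 'o \<Rightarrow> ('m \<Rightarrow> 'a) \<Rightarrow> 'a \<Rightarrow> bool" where
  "act_mor C Y b Z g f \<longleftrightarrow> global_action C Y b \<and> global_action C Z g \<and>
     datum_mor C Y (\<lambda>_. Y) (\<lambda>_. Id C Y) b Z (\<lambda>_. Z) (\<lambda>_. Id C Z) g f"

definition is_reflection ::
  "('o, 'a) cat \<Rightarrow> 'o \<Rightarrow> ('m::monoid_mult \<Rightarrow> 'o) \<Rightarrow> ('m \<Rightarrow> 'a) \<Rightarrow> ('m \<Rightarrow> 'a)
     \<Rightarrow> 'o \<Rightarrow> ('m \<Rightarrow> 'a) \<Rightarrow> 'a \<Rightarrow> bool" where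
  "is_reflection C X D \<iota> \<alpha> Y b r \<longleftrightarrow> global_action C Y b \<and>
     datum_mor C X D \<iota> \<alpha> Y (\<lambda>_. Y) (\<lambda>_. Id C Y) b r \<and>
     (\<forall>Z g f. global_action C Z g \<and>
        datum_mor C X D \<iota> \<alpha> Z (\<lambda>_. Z) (\<lambda>_. Id C Z) g f \<longrightarrow>
        (\<exists>!f'. act_mor C Y b Z g f' \<and> Comp C f' r = f))"

definition is_act_coequalizer ::
  "('o, 'a) cat \<Rightarrow> 'o \<Rightarrow> ('m::monoid_mult \<Rightarrow> 'a) \<Rightarrow> 'o \<Rightarrow> ('m \<Rightarrow> 'a) \<Rightarrow> 'a \<Rightarrow> 'a
     \<Rightarrow> 'o \<Rightarrow> ('m \<Rightarrow> 'a) \<Rightarrow> 'a \<Rightarrow> bool" where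
  "is_act_coequalizer C A a B b p q Z z c \<longleftrightarrow>
     act_mor C A a B b p \<and> act_mor C A a B b q \<and>
     act_mor C B b Z z c \<and> Comp C c p = Comp C c q \<and>
     (\<forall>W w g. act_mor C B b W w g \<and> Comp C g p = Comp C g q \<longrightarrow>
        (\<exists>!g'. act_mor C Z z W w g' \<and> Comp C g' c = g))"

definition is_coproduct :: "('o, 'a) cat \<Rightarrow> ('i \<Rightarrow> 'o) \<Rightarrow> 'o \<Rightarrow> ('i \<Rightarrow> 'a) \<Rightarrow> bool" where
  "is_coproduct C A P u \<longleftrightarrow> P \<in> Obj C \<and> (\<forall>i. u i \<in> hom C (A i) P) \<and>
     (\<forall>Z f. Z \<in> Obj C \<and> (\<forall>i. f i \<in> hom C (A i) Z) \<longrightarrow>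
        (\<exists>!h. h \<in> hom C P Z \<and> (\<forall>i. Comp C h (u i) = f i)))"

definition copair :: "('o, 'a) cat \<Rightarrow> 'o \<Rightarrow> ('i \<Rightarrow> 'a) \<Rightarrow> 'o \<Rightarrow> ('i \<Rightarrow> 'a) \<Rightarrow> 'a" where
  "copair C P u Z f = (THE h. h \<in> hom C P Z \<and> (\<forall>i. Comp C h (u i) = f i))"

definition pmap :: "('o, 'a) cat \<Rightarrow> ('m::monoid_mult \<Rightarrow> 'a) \<Rightarrow> 'o \<Rightarrow> ('m \<Rightarrow> 'a)
     \<Rightarrow> 'o \<Rightarrow> ('m \<times> 'm \<Rightarrow> 'a) \<Rightarrow> 'a" where
  "pmap C \<iota> P1 u1 P2 u2 = copair C P2 u2 P1 (\<lambda>(m, n). Comp C (u1 (m * n)) (\<iota> n))"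

definition qmap :: "('o, 'a) cat \<Rightarrow> ('m \<Rightarrow> 'a) \<Rightarrow> 'o \<Rightarrow> ('m \<Rightarrow> 'a)
     \<Rightarrow> 'o \<Rightarrow> ('m \<times> 'm \<Rightarrow> 'a) \<Rightarrow> 'a" where
  "qmap C \<alpha> P1 u1 P2 u2 = copair C P2 u2 P1 (\<lambda>(m, n). Comp C (u1 m) (\<alpha> n))"

definition phi_act :: "('o, 'a) cat \<Rightarrow> 'o \<Rightarrow> ('m::monoid_mult \<times> 'm \<Rightarrow> 'a) \<Rightarrow> 'm \<Rightarrow> 'a" where
  "phi_act C P2 u2 m = copair C P2 u2 P2 (\<lambda>(s, t). u2 (m * s, t))"

definition psi_act :: "('o, 'a) cat \<Rightarrow> 'o \<Rightarrow> ('m::monoid_mult \<Rightarrow> 'a) \<Rightarrow> 'm \<Rightarrow> 'a" where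
  "psi_act C P1 u1 m = copair C P1 u1 P1 (\<lambda>s. u1 (m * s))"

definition H_map :: "('o, 'a) cat \<Rightarrow> 'o \<Rightarrow> ('m \<Rightarrow> 'a) \<Rightarrow> 'o \<Rightarrow> ('m \<Rightarrow> 'a) \<Rightarrow> 'a \<Rightarrow> 'a" where
  "H_map C P1 u1 Z g f = copair C P1 u1 Z (\<lambda>m. Comp C (g m) f)"

end

theory Submission
  imports Defs
begin

text \<open>The action \<open>\<psi>\<close> on \<open>\<Coprod>\<^sub>m X\<close> is the free \<open>M\<close>-action on \<open>X\<close> with basis \<open>u\<^sub>1 1\<close>: an equivariant
  map out of it is the same as a morphism out of \<open>X\<close>, namely its restriction along \<open>u\<^sub>1 1\<close>,
  and \<open>H\<close> is the inverse of restriction. Under this correspondence an equivariant map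
  coequalizes \<open>p\<close> and \<open>q\<close> exactly when its restriction is a datum morphism, because
  \<open>p\<close> and \<open>q\<close> restricted along \<open>u\<^sub>2 (1, n)\<close> are \<open>\<iota>\<^sub>n\<close> and \<open>\<alpha>\<^sub>n\<close>. So reflections of \<open>\<alpha>\<close> and
  coequalizers of \<open>p, q\<close> represent the same functor on \<open>Act\<^sub>M(\<C>)\<close>.\<close>

locale category =
  fixes C :: "('o, 'a) cat"
  assumes is_category: "is_category C"
begin

abbreviation cat_comp (infixr "\<cdot>" 55) where "g \<cdot> f \<equiv> Comp C g f"

lemma comp_in_hom: "f \<in> hom C A B \<Longrightarrow> g \<in> hom C B E \<Longrightarrow> g \<cdot> f \<in> hom C A E"
  using is_category unfolding is_category_def hom_def by auto

lemma hom_comp_assoc: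
  "f \<in> hom C A B \<Longrightarrow> g \<in> hom C B E \<Longrightarrow> h \<in> hom C E F \<Longrightarrow> h \<cdot> (g \<cdot> f) = (h \<cdot> g) \<cdot> f"
  using is_category unfolding is_category_def hom_def by auto

lemma id_in_hom: "A \<in> Obj C \<Longrightarrow> Id C A \<in> hom C A A"
  using is_category unfolding is_category_def by auto

lemma comp_id_left: "f \<in> hom C A B \<Longrightarrow> Id C B \<cdot> f = f"
  using is_category unfolding is_category_def hom_def by auto

lemma comp_id_right: "f \<in> hom C A B \<Longrightarrow> f \<cdot> Id C A = f"
  using is_category unfolding is_category_def hom_def by auto

lemma hom_cod_in_Obj: "f \<in> hom C A B \<Longrightarrow> B \<in> Obj C"
  using is_category unfolding is_category_def hom_def by auto

lemma copair_in_hom: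
  assumes "is_coproduct C A P u" "Z \<in> Obj C" "\<And>i. f i \<in> hom C (A i) Z"
  shows "copair C P u Z f \<in> hom C P Z"
  using theI'[of "\<lambda>h. h \<in> hom C P Z \<and> (\<forall>i. h \<cdot> u i = f i)"] assms
  unfolding is_coproduct_def copair_def by blast

lemma copair_comp_inj:
  assumes "is_coproduct C A P u" "Z \<in> Obj C" "\<And>i. f i \<in> hom C (A i) Z"
  shows "copair C P u Z f \<cdot> u i = f i"
  using theI'[of "\<lambda>h. h \<in> hom C P Z \<and> (\<forall>i. h \<cdot> u i = f i)"] assms
  unfolding is_coproduct_def copair_def by blast

lemma coproduct_ext:
  assumes cop: "is_coproduct C A P u"
    and h: "h \<in> hom C P Z" and h': "h' \<in> hom C P Z" and eq: "\<And>i. h \<cdot> u i = h' \<cdot> u i"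
  shows "h = h'"
proof -
  have "h' \<cdot> u i \<in> hom C (A i) Z" for i
    using cop comp_in_hom[OF _ h'] unfolding is_coproduct_def by blast
  then have "\<exists>!k. k \<in> hom C P Z \<and> (\<forall>i. k \<cdot> u i = h' \<cdot> u i)"
    using cop hom_cod_in_Obj[OF h] unfolding is_coproduct_def by presburger
  then show ?thesis using h h' eq by blast
qed

lemma global_actionD:
  assumes "global_action C Y b"
  shows "Y \<in> Obj C" "b m \<in> hom C Y Y" "b 1 = Id C Y" "b n \<cdot> b m = b (n * m)"
  using assms unfolding global_action_def by blast+

lemma datum_mor_into_global_iff:
  assumes \<iota>: "\<And>m. \<iota> m \<in> hom C (D m) X"
  shows "datum_mor C X D \<iota> \<alpha> Z (\<lambda>_. Z) (\<lambda>_. Id C Z) g f \<longleftrightarrow>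
           f \<in> hom C X Z \<and> (\<forall>m. g m \<cdot> (f \<cdot> \<iota> m) = f \<cdot> \<alpha> m)"
    (is "?datum \<longleftrightarrow> ?f \<and> ?eqs")
proof
  assume d: ?datum
  then have f: ?f unfolding datum_mor_def by blast
  have "g m \<cdot> (f \<cdot> \<iota> m) = f \<cdot> \<alpha> m" for m
  proof -
    from d obtain fm where "fm \<in> hom C (D m) Z" "Id C Z \<cdot> fm = f \<cdot> \<iota> m" "g m \<cdot> fm = f \<cdot> \<alpha> m"
      unfolding datum_mor_def by blast
    then show ?thesis by (simp add: comp_id_left)
  qed
  with f show "?f \<and> ?eqs" by blast
next
  assume "?f \<and> ?eqs"
  then show ?datum
    unfolding datum_mor_def using comp_in_hom[OF \<iota>] comp_id_left[OF comp_in_hom[OF \<iota>]] by blast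
qed

lemma act_mor_iff:
  "act_mor C Y b Z g f \<longleftrightarrow> global_action C Y b \<and> global_action C Z g \<and>
     f \<in> hom C Y Z \<and> (\<forall>m. g m \<cdot> f = f \<cdot> b m)"
proof -
  have "datum_mor C Y (\<lambda>_. Y) (\<lambda>_. Id C Y) b Z (\<lambda>_. Z) (\<lambda>_. Id C Z) g f \<longleftrightarrow>
          f \<in> hom C Y Z \<and> (\<forall>m. g m \<cdot> f = f \<cdot> b m)"
    if "global_action C Y b"
  proof -
    from datum_mor_into_global_iff[of "\<lambda>_. Id C Y", OF id_in_hom[OF global_actionD(1)[OF that]]]
    show ?thesis by (auto simp: comp_id_right)
  qed
  then show ?thesis unfolding act_mor_def by blast
qed

lemma act_mor_comp:
  assumes f: "act_mor C Y b Z g f" and k: "act_mor C Z g W w k"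
  shows "act_mor C Y b W w (k \<cdot> f)"
proof -
  have fh: "f \<in> hom C Y Z" and kh: "k \<in> hom C Z W"
    and f_eq: "\<And>m. g m \<cdot> f = f \<cdot> b m" and k_eq: "\<And>m. w m \<cdot> k = k \<cdot> g m"
    using f k unfolding act_mor_iff by blast+
  have bh: "b m \<in> hom C Y Y" and gh: "g m \<in> hom C Z Z" and wh: "w m \<in> hom C W W" for m
    using f k global_actionD(2) unfolding act_mor_iff by blast+
  have "w m \<cdot> (k \<cdot> f) = (k \<cdot> f) \<cdot> b m" for m
  proof -
    have "w m \<cdot> (k \<cdot> f) = (k \<cdot> g m) \<cdot> f" using hom_comp_assoc[OF fh kh wh] k_eq by simp
    also have "\<dots> = k \<cdot> (f \<cdot> b m)" using hom_comp_assoc[OF fh gh kh] f_eq by simp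
    also have "\<dots> = (k \<cdot> f) \<cdot> b m" using hom_comp_assoc[OF bh fh kh] .
    finally show ?thesis .
  qed
  then show ?thesis
    using f k comp_in_hom[OF fh kh] unfolding act_mor_iff by blast
qed

end

locale partial_action_coproducts = category C
  for C :: "('o, 'a) cat"
    and X :: 'o and D :: "'m::monoid_mult \<Rightarrow> 'o" and \<iota> \<alpha> :: "'m \<Rightarrow> 'a"
    and P1 :: 'o and u1 :: "'m \<Rightarrow> 'a" and P2 :: 'o and u2 :: "'m \<times> 'm \<Rightarrow> 'a" +
  assumes datum: "partial_action_datum C X D \<iota> \<alpha>"
    and coproduct1: "is_coproduct C (\<lambda>_. X) P1 u1"
    and coproduct2: "is_coproduct C (\<lambda>(m, n). D n) P2 u2"
begin

abbreviation "\<psi> \<equiv> psi_act C P1 u1"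
abbreviation "\<phi> \<equiv> phi_act C P2 u2"
abbreviation "p \<equiv> pmap C \<iota> P1 u1 P2 u2"
abbreviation "q \<equiv> qmap C \<alpha> P1 u1 P2 u2"
abbreviation "H \<equiv> H_map C P1 u1"
abbreviation "is_datum_mor Z g f \<equiv> datum_mor C X D \<iota> \<alpha> Z (\<lambda>_. Z) (\<lambda>_. Id C Z) g f"

lemma iota_in_hom: "\<iota> n \<in> hom C (D n) X"
  and alpha_in_hom: "\<alpha> n \<in> hom C (D n) X"
  using datum unfolding partial_action_datum_def by auto

lemma is_datum_mor_iff:
  "is_datum_mor Z g f \<longleftrightarrow> f \<in> hom C X Z \<and> (\<forall>m. g m \<cdot> (f \<cdot> \<iota> m) = f \<cdot> \<alpha> m)"
  by (rule datum_mor_into_global_iff) (rule iota_in_hom)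

lemma u1_in_hom: "u1 s \<in> hom C X P1"
  and P1_in_Obj: "P1 \<in> Obj C"
  using coproduct1 unfolding is_coproduct_def by auto

lemma u2_in_hom: "u2 (m, n) \<in> hom C (D n) P2"
  and P2_in_Obj: "P2 \<in> Obj C"
  using coproduct2 unfolding is_coproduct_def by (auto dest: spec[of _ "(m, n)"])

lemma P1_ext: "h \<in> hom C P1 Z \<Longrightarrow> h' \<in> hom C P1 Z \<Longrightarrow> (\<And>s. h \<cdot> u1 s = h' \<cdot> u1 s) \<Longrightarrow> h = h'"
  by (rule coproduct_ext[OF coproduct1])

lemma P2_ext:
  "h \<in> hom C P2 Z \<Longrightarrow> h' \<in> hom C P2 Z \<Longrightarrow> (\<And>m n. h \<cdot> u2 (m, n) = h' \<cdot> u2 (m, n)) \<Longrightarrow> h = h'"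
  by (rule coproduct_ext[OF coproduct2]) auto

lemma P1_copair:
  assumes "Z \<in> Obj C" "\<And>s. f s \<in> hom C X Z"
  shows "copair C P1 u1 Z f \<in> hom C P1 Z" "copair C P1 u1 Z f \<cdot> u1 s = f s"
  using copair_in_hom[OF coproduct1] copair_comp_inj[OF coproduct1] assms by auto

lemma P2_copair:
  assumes "Z \<in> Obj C" "\<And>m n. f (m, n) \<in> hom C (D n) Z"
  shows "copair C P2 u2 Z f \<in> hom C P2 Z" "copair C P2 u2 Z f \<cdot> u2 (m, n) = f (m, n)"
  using copair_in_hom[OF coproduct2] copair_comp_inj[OF coproduct2] assms
  by (auto simp: split_paired_all)

lemma psi_in_hom: "\<psi> m \<in> hom C P1 P1"
  and psi_comp_inj: "\<psi> m \<cdot> u1 s = u1 (m * s)"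
  unfolding psi_act_def using P1_copair[OF P1_in_Obj u1_in_hom] by auto

lemma phi_in_hom: "\<phi> m \<in> hom C P2 P2"
  and phi_comp_inj: "\<phi> m \<cdot> u2 (s, t) = u2 (m * s, t)"
  unfolding phi_act_def using P2_copair[OF P2_in_Obj, of "\<lambda>(s, t). u2 (m * s, t)"] u2_in_hom
  by auto

lemma p_in_hom: "p \<in> hom C P2 P1"
  and p_comp_inj: "p \<cdot> u2 (m, n) = u1 (m * n) \<cdot> \<iota> n"
  unfolding pmap_def using P2_copair[OF P1_in_Obj, of "\<lambda>(m, n). u1 (m * n) \<cdot> \<iota> n"]
    comp_in_hom[OF iota_in_hom u1_in_hom] by auto

lemma q_in_hom: "q \<in> hom C P2 P1"
  and q_comp_inj: "q \<cdot> u2 (m, n) = u1 m \<cdot> \<alpha> n"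
  unfolding qmap_def using P2_copair[OF P1_in_Obj, of "\<lambda>(m, n). u1 m \<cdot> \<alpha> n"]
    comp_in_hom[OF alpha_in_hom u1_in_hom] by auto

lemma global_action_psi: "global_action C P1 \<psi>"
  unfolding global_action_def
proof (intro conjI allI P1_in_Obj psi_in_hom)
  show "\<psi> 1 = Id C P1"
    by (rule P1_ext[OF psi_in_hom id_in_hom[OF P1_in_Obj]])
      (simp add: psi_comp_inj comp_id_left[OF u1_in_hom])
  show "\<psi> n \<cdot> \<psi> m = \<psi> (n * m)" for m n
  proof (rule P1_ext[OF comp_in_hom[OF psi_in_hom psi_in_hom] psi_in_hom])
    fix s
    have "(\<psi> n \<cdot> \<psi> m) \<cdot> u1 s = \<psi> n \<cdot> (\<psi> m \<cdot> u1 s)"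
      using hom_comp_assoc[OF u1_in_hom psi_in_hom psi_in_hom] by simp
    then show "(\<psi> n \<cdot> \<psi> m) \<cdot> u1 s = \<psi> (n * m) \<cdot> u1 s"
      by (simp add: psi_comp_inj mult.assoc)
  qed
qed

lemma global_action_phi: "global_action C P2 \<phi>"
  unfolding global_action_def
proof (intro conjI allI P2_in_Obj phi_in_hom)
  show "\<phi> 1 = Id C P2"
    by (rule P2_ext[OF phi_in_hom id_in_hom[OF P2_in_Obj]])
      (simp add: phi_comp_inj comp_id_left[OF u2_in_hom])
  show "\<phi> n \<cdot> \<phi> m = \<phi> (n * m)" for m n
  proof (rule P2_ext[OF comp_in_hom[OF phi_in_hom phi_in_hom] phi_in_hom])
    fix s t
    have "(\<phi> n \<cdot> \<phi> m) \<cdot> u2 (s, t) = \<phi> n \<cdot> (\<phi> m \<cdot> u2 (s, t))"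
      using hom_comp_assoc[OF u2_in_hom phi_in_hom phi_in_hom] by simp
    then show "(\<phi> n \<cdot> \<phi> m) \<cdot> u2 (s, t) = \<phi> (n * m) \<cdot> u2 (s, t)"
      by (simp add: phi_comp_inj mult.assoc)
  qed
qed

lemma act_mor_p: "act_mor C P2 \<phi> P1 \<psi> p"
  unfolding act_mor_iff
proof (intro conjI allI global_action_phi global_action_psi p_in_hom)
  show "\<psi> m \<cdot> p = p \<cdot> \<phi> m" for m
  proof (rule P2_ext[OF comp_in_hom[OF p_in_hom psi_in_hom] comp_in_hom[OF phi_in_hom p_in_hom]])
    fix s t
    have "(\<psi> m \<cdot> p) \<cdot> u2 (s, t) = (\<psi> m \<cdot> u1 (s * t)) \<cdot> \<iota> t"
      using hom_comp_assoc[OF u2_in_hom p_in_hom psi_in_hom]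
        hom_comp_assoc[OF iota_in_hom u1_in_hom psi_in_hom] p_comp_inj by simp
    also have "\<dots> = p \<cdot> (\<phi> m \<cdot> u2 (s, t))"
      by (simp add: psi_comp_inj phi_comp_inj p_comp_inj mult.assoc)
    also have "\<dots> = (p \<cdot> \<phi> m) \<cdot> u2 (s, t)"
      using hom_comp_assoc[OF u2_in_hom phi_in_hom p_in_hom] .
    finally show "(\<psi> m \<cdot> p) \<cdot> u2 (s, t) = (p \<cdot> \<phi> m) \<cdot> u2 (s, t)" .
  qed
qed

lemma act_mor_q: "act_mor C P2 \<phi> P1 \<psi> q"
  unfolding act_mor_iff
proof (intro conjI allI global_action_phi global_action_psi q_in_hom)
  show "\<psi> m \<cdot> q = q \<cdot> \<phi> m" for m
  proof (rule P2_ext[OF comp_in_hom[OF q_in_hom psi_in_hom] comp_in_hom[OF phi_in_hom q_in_hom]])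
    fix s t
    have "(\<psi> m \<cdot> q) \<cdot> u2 (s, t) = (\<psi> m \<cdot> u1 s) \<cdot> \<alpha> t"
      using hom_comp_assoc[OF u2_in_hom q_in_hom psi_in_hom]
        hom_comp_assoc[OF alpha_in_hom u1_in_hom psi_in_hom] q_comp_inj by simp
    also have "\<dots> = q \<cdot> (\<phi> m \<cdot> u2 (s, t))"
      by (simp add: psi_comp_inj phi_comp_inj q_comp_inj)
    also have "\<dots> = (q \<cdot> \<phi> m) \<cdot> u2 (s, t)"
      using hom_comp_assoc[OF u2_in_hom phi_in_hom q_in_hom] .
    finally show "(\<psi> m \<cdot> q) \<cdot> u2 (s, t) = (q \<cdot> \<phi> m) \<cdot> u2 (s, t)" .
  qed
qed

lemma act_mor_from_psi_comp_inj:
  assumes "act_mor C P1 \<psi> Z g h"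
  shows "h \<cdot> u1 s = g s \<cdot> (h \<cdot> u1 1)"
proof -
  have h: "h \<in> hom C P1 Z" and eq: "\<And>m. g m \<cdot> h = h \<cdot> \<psi> m" and g: "\<And>m. g m \<in> hom C Z Z"
    using assms global_actionD(2) unfolding act_mor_iff by blast+
  have "h \<cdot> u1 s = h \<cdot> (\<psi> s \<cdot> u1 1)" by (simp add: psi_comp_inj)
  also have "\<dots> = (g s \<cdot> h) \<cdot> u1 1" using hom_comp_assoc[OF u1_in_hom psi_in_hom h] eq by simp
  also have "\<dots> = g s \<cdot> (h \<cdot> u1 1)" using hom_comp_assoc[OF u1_in_hom h g] by simp
  finally show ?thesis .
qed

lemma act_mor_from_psi_eq_iff:
  assumes h: "act_mor C P1 \<psi> Z g h" and h': "act_mor C P1 \<psi> Z g h'"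
  shows "h = h' \<longleftrightarrow> h \<cdot> u1 1 = h' \<cdot> u1 1"
proof
  assume eq: "h \<cdot> u1 1 = h' \<cdot> u1 1"
  show "h = h'"
  proof (rule P1_ext)
    show "h \<in> hom C P1 Z" "h' \<in> hom C P1 Z" using h h' unfolding act_mor_iff by blast+
    show "h \<cdot> u1 s = h' \<cdot> u1 s" for s
      using act_mor_from_psi_comp_inj[OF h, of s] act_mor_from_psi_comp_inj[OF h', of s] eq by metis
  qed
qed simp

lemma
  fixes g :: "'m \<Rightarrow> 'a"
  assumes g: "global_action C Z g" and f: "f \<in> hom C X Z"
  shows H_map_in_hom: "H Z g f \<in> hom C P1 Z"
    and act_mor_H_map: "act_mor C P1 \<psi> Z g (H Z g f)"
    and H_map_comp_inj_one: "H Z g f \<cdot> u1 1 = f"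
proof -
  note Z = global_actionD(1)[OF g] and gh = global_actionD(2)[OF g]
    and g1 = global_actionD(3)[OF g] and gmul = global_actionD(4)[OF g]
  note H = P1_copair[OF Z, of "\<lambda>s. g s \<cdot> f", OF comp_in_hom[OF f gh], folded H_map_def]
  show "H Z g f \<in> hom C P1 Z" by (rule H(1))
  show "H Z g f \<cdot> u1 1 = f" using H(2)[of 1] g1 comp_id_left[OF f] by simp
  have "g m \<cdot> H Z g f = H Z g f \<cdot> \<psi> m" for m
  proof (rule P1_ext[OF comp_in_hom[OF H(1) gh] comp_in_hom[OF psi_in_hom H(1)]])
    fix s
    have "(g m \<cdot> H Z g f) \<cdot> u1 s = g m \<cdot> (g s \<cdot> f)"
      using hom_comp_assoc[OF u1_in_hom H(1) gh] H(2) by simp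
    also have "\<dots> = H Z g f \<cdot> (\<psi> m \<cdot> u1 s)"
      using hom_comp_assoc[OF f gh gh] gmul H(2) psi_comp_inj by simp
    also have "\<dots> = (H Z g f \<cdot> \<psi> m) \<cdot> u1 s" using hom_comp_assoc[OF u1_in_hom psi_in_hom H(1)] .
    finally show "(g m \<cdot> H Z g f) \<cdot> u1 s = (H Z g f \<cdot> \<psi> m) \<cdot> u1 s" .
  qed
  then show "act_mor C P1 \<psi> Z g (H Z g f)"
    unfolding act_mor_iff using global_action_psi g H(1) by blast
qed

lemma act_mor_from_psi_comp_p:
  assumes h: "act_mor C P1 \<psi> Z g h"
  shows "(h \<cdot> p) \<cdot> u2 (m, n) = g m \<cdot> (g n \<cdot> ((h \<cdot> u1 1) \<cdot> \<iota> n))"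
proof -
  have hh: "h \<in> hom C P1 Z" and g: "global_action C Z g" using h unfolding act_mor_iff by blast+
  have f: "h \<cdot> u1 1 \<in> hom C X Z" using comp_in_hom[OF u1_in_hom hh] .
  note gh = global_actionD(2)[OF g]
  have "(h \<cdot> p) \<cdot> u2 (m, n) = (h \<cdot> u1 (m * n)) \<cdot> \<iota> n"
    using hom_comp_assoc[OF u2_in_hom p_in_hom hh] hom_comp_assoc[OF iota_in_hom u1_in_hom hh]
      p_comp_inj by simp
  also have "\<dots> = ((g m \<cdot> g n) \<cdot> (h \<cdot> u1 1)) \<cdot> \<iota> n"
    by (simp only: act_mor_from_psi_comp_inj[OF h, of "m * n"] global_actionD(4)[OF g])
  also have "\<dots> = g m \<cdot> (g n \<cdot> ((h \<cdot> u1 1) \<cdot> \<iota> n))"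
    using hom_comp_assoc[OF f gh gh] hom_comp_assoc[OF iota_in_hom comp_in_hom[OF f gh] gh]
      hom_comp_assoc[OF iota_in_hom f gh] by metis
  finally show ?thesis .
qed

lemma act_mor_from_psi_comp_q:
  assumes h: "act_mor C P1 \<psi> Z g h"
  shows "(h \<cdot> q) \<cdot> u2 (m, n) = g m \<cdot> ((h \<cdot> u1 1) \<cdot> \<alpha> n)"
proof -
  have hh: "h \<in> hom C P1 Z" and g: "global_action C Z g" using h unfolding act_mor_iff by blast+
  have "(h \<cdot> q) \<cdot> u2 (m, n) = (h \<cdot> u1 m) \<cdot> \<alpha> n"
    using hom_comp_assoc[OF u2_in_hom q_in_hom hh] hom_comp_assoc[OF alpha_in_hom u1_in_hom hh]
      q_comp_inj by simp
  also have "\<dots> = g m \<cdot> ((h \<cdot> u1 1) \<cdot> \<alpha> n)"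
    using act_mor_from_psi_comp_inj[OF h, of m]
      hom_comp_assoc[OF alpha_in_hom comp_in_hom[OF u1_in_hom hh] global_actionD(2)[OF g]]
    by metis
  finally show ?thesis .
qed

lemma coequalizes_iff_datum_mor:
  assumes h: "act_mor C P1 \<psi> Z g h"
  shows "h \<cdot> p = h \<cdot> q \<longleftrightarrow> is_datum_mor Z g (h \<cdot> u1 1)"
proof -
  have hh: "h \<in> hom C P1 Z" and g: "global_action C Z g" using h unfolding act_mor_iff by blast+
  have f: "h \<cdot> u1 1 \<in> hom C X Z" using comp_in_hom[OF u1_in_hom hh] .
  note gh = global_actionD(2)[OF g]
  show ?thesis
    unfolding is_datum_mor_iff using f
  proof (intro iffI conjI allI)
    assume coeq: "h \<cdot> p = h \<cdot> q"
    show "g n \<cdot> ((h \<cdot> u1 1) \<cdot> \<iota> n) = (h \<cdot> u1 1) \<cdot> \<alpha> n" for n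
      using act_mor_from_psi_comp_p[OF h, of 1 n] act_mor_from_psi_comp_q[OF h, of 1 n] coeq
        global_actionD(3)[OF g] comp_id_left[OF comp_in_hom[OF comp_in_hom[OF iota_in_hom f] gh]]
        comp_id_left[OF comp_in_hom[OF alpha_in_hom f]]
      by metis
  next
    assume "h \<cdot> u1 1 \<in> hom C X Z \<and> (\<forall>n. g n \<cdot> ((h \<cdot> u1 1) \<cdot> \<iota> n) = (h \<cdot> u1 1) \<cdot> \<alpha> n)"
    then show "h \<cdot> p = h \<cdot> q"
      by (intro P2_ext[OF comp_in_hom[OF p_in_hom hh] comp_in_hom[OF q_in_hom hh]])
        (simp add: act_mor_from_psi_comp_p[OF h] act_mor_from_psi_comp_q[OF h])
  qed
qed

lemma reflection_H_map_is_act_coequalizer: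
  assumes refl: "is_reflection C X D \<iota> \<alpha> Y \<beta> r"
  shows "is_act_coequalizer C P2 \<phi> P1 \<psi> p q Y \<beta> (H Y \<beta> r)"
proof -
  have gY: "global_action C Y \<beta>" and r: "is_datum_mor Y \<beta> r"
    and univ: "\<And>Z g f. global_action C Z g \<Longrightarrow> is_datum_mor Z g f \<Longrightarrow>
                 \<exists>!f'. act_mor C Y \<beta> Z g f' \<and> f' \<cdot> r = f"
    using refl unfolding is_reflection_def by blast+
  have rh: "r \<in> hom C X Y" using r is_datum_mor_iff by blast
  note c_act = act_mor_H_map[OF gY rh] and c_one = H_map_comp_inj_one[OF gY rh]
  have c_coeq: "H Y \<beta> r \<cdot> p = H Y \<beta> r \<cdot> q"
    using coequalizes_iff_datum_mor[OF c_act] c_one r by simp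
  show ?thesis
    unfolding is_act_coequalizer_def
  proof (intro conjI allI impI act_mor_p act_mor_q c_act c_coeq)
    fix W w k
    assume "act_mor C P1 \<psi> W w k \<and> k \<cdot> p = k \<cdot> q"
    then have k: "act_mor C P1 \<psi> W w k" and kd: "is_datum_mor W w (k \<cdot> u1 1)"
      using coequalizes_iff_datum_mor by blast+
    have gW: "global_action C W w" using k unfolding act_mor_iff by blast
    have "y \<cdot> H Y \<beta> r = k \<longleftrightarrow> y \<cdot> r = k \<cdot> u1 1" if y: "act_mor C Y \<beta> W w y" for y
    proof -
      have "y \<in> hom C Y W" using y unfolding act_mor_iff by blast
      then have "(y \<cdot> H Y \<beta> r) \<cdot> u1 1 = y \<cdot> r"
        using hom_comp_assoc[OF u1_in_hom H_map_in_hom[OF gY rh]] c_one by metis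
      then show ?thesis using act_mor_from_psi_eq_iff[OF act_mor_comp[OF c_act y] k] by simp
    qed
    then have "(\<lambda>y. act_mor C Y \<beta> W w y \<and> y \<cdot> H Y \<beta> r = k) =
               (\<lambda>y. act_mor C Y \<beta> W w y \<and> y \<cdot> r = k \<cdot> u1 1)"
      by blast
    with univ[OF gW kd] show "\<exists>!k'. act_mor C Y \<beta> W w k' \<and> k' \<cdot> H Y \<beta> r = k"
      by simp
  qed
qed

lemma act_coequalizer_comp_inj_is_reflection:
  assumes coeq: "is_act_coequalizer C P2 \<phi> P1 \<psi> p q Y \<beta> c"
  shows "is_reflection C X D \<iota> \<alpha> Y \<beta> (c \<cdot> u1 1)"
proof -
  have c_act: "act_mor C P1 \<psi> Y \<beta> c" and c_coeq: "c \<cdot> p = c \<cdot> q"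
    and univ: "\<And>W w k. act_mor C P1 \<psi> W w k \<Longrightarrow> k \<cdot> p = k \<cdot> q \<Longrightarrow>
                 \<exists>!k'. act_mor C Y \<beta> W w k' \<and> k' \<cdot> c = k"
    using coeq unfolding is_act_coequalizer_def by blast+
  have gY: "global_action C Y \<beta>" and ch: "c \<in> hom C P1 Y"
    using c_act unfolding act_mor_iff by blast+
  show ?thesis
    unfolding is_reflection_def
  proof (intro conjI allI impI gY coequalizes_iff_datum_mor[OF c_act, THEN iffD1, OF c_coeq])
    fix Z g f
    assume "global_action C Z g \<and> is_datum_mor Z g f"
    then have gZ: "global_action C Z g" and f: "is_datum_mor Z g f" by blast+
    have fh: "f \<in> hom C X Z" using f is_datum_mor_iff by blast
    note H_act = act_mor_H_map[OF gZ fh] and H_one = H_map_comp_inj_one[OF gZ fh]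
    have H_coeq: "H Z g f \<cdot> p = H Z g f \<cdot> q"
      using coequalizes_iff_datum_mor[OF H_act] H_one f by simp
    have "y \<cdot> c = H Z g f \<longleftrightarrow> y \<cdot> (c \<cdot> u1 1) = f" if y: "act_mor C Y \<beta> Z g y" for y
    proof -
      have "y \<in> hom C Y Z" using y unfolding act_mor_iff by blast
      then have "(y \<cdot> c) \<cdot> u1 1 = y \<cdot> (c \<cdot> u1 1)" using hom_comp_assoc[OF u1_in_hom ch] by metis
      then show ?thesis using act_mor_from_psi_eq_iff[OF act_mor_comp[OF c_act y] H_act] H_one by simp
    qed
    then have "(\<lambda>y. act_mor C Y \<beta> Z g y \<and> y \<cdot> c = H Z g f) =
               (\<lambda>y. act_mor C Y \<beta> Z g y \<and> y \<cdot> (c \<cdot> u1 1) = f)"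
      by blast
    with univ[OF H_act H_coeq] show "\<exists>!f'. act_mor C Y \<beta> Z g f' \<and> f' \<cdot> (c \<cdot> u1 1) = f"
      by simp
  qed
qed

end

text \<open>The pullback hypothesis belongs to the paper's standing assumptions; this argument does not use it.\<close>

theorem mainTheorem15:
  fixes C :: "('o, 'a) cat"
    and X :: 'o and D :: "'m::monoid_mult \<Rightarrow> 'o" and \<iota> \<alpha> :: "'m \<Rightarrow> 'a"
    and P1 :: 'o and u1 :: "'m \<Rightarrow> 'a" and P2 :: 'o and u2 :: "'m \<times> 'm \<Rightarrow> 'a"
  assumes cat: "is_category C"
    and pb: "has_pullbacks C"
    and dat: "partial_action_datum C X D \<iota> \<alpha>"
    and cop1: "is_coproduct C (\<lambda>_. X) P1 u1"
    and cop2: "is_coproduct C (\<lambda>(m, n). D n) P2 u2"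
  shows "(\<forall>Y \<beta> r. is_reflection C X D \<iota> \<alpha> Y \<beta> r \<longrightarrow>
            is_act_coequalizer C P2 (phi_act C P2 u2) P1 (psi_act C P1 u1)
              (pmap C \<iota> P1 u1 P2 u2) (qmap C \<alpha> P1 u1 P2 u2) Y \<beta> (H_map C P1 u1 Y \<beta> r))
       \<and> (\<forall>Y \<beta> c. is_act_coequalizer C P2 (phi_act C P2 u2) P1 (psi_act C P1 u1)
              (pmap C \<iota> P1 u1 P2 u2) (qmap C \<alpha> P1 u1 P2 u2) Y \<beta> c \<longrightarrow>
            is_reflection C X D \<iota> \<alpha> Y \<beta> (Comp C c (u1 1)))
       \<and> ((\<exists>Y \<beta> r. is_reflection C X D \<iota> \<alpha> Y \<beta> r) \<longleftrightarrow>
          (\<exists>Y \<beta> c. is_act_coequalizer C P2 (phi_act C P2 u2) P1 (psi_act C P1 u1)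
              (pmap C \<iota> P1 u1 P2 u2) (qmap C \<alpha> P1 u1 P2 u2) Y \<beta> c))"
proof -
  interpret partial_action_coproducts C X D \<iota> \<alpha> P1 u1 P2 u2
    using cat dat cop1 cop2 by unfold_locales
  show ?thesis
    using reflection_H_map_is_act_coequalizer act_coequalizer_comp_inj_is_reflection by blast
qed

end
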